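(* Let $L>0$ and let $a\in C^1_{\mathrm{pw}}[-L,L]$ with $a\ge a_{\min}>0$, and let $-L=z_0<\dots<z_N=L$ be a partition such that $a\in C^1[z_{j-1},z_j]$ and $a'$ is either $>0$ throughout or $\le0$ throughout on each $\tau_j=(z_{j-1},z_j)$. Define $\tilde a$ on each $\tau_j$ by $\tilde a=a$ if $a'>0$ on $\tau_j$, and $\tilde a\equiv a^+(z_{j-1})$ if $a'\le0$ on $\tau_j$ (right-continuous at $z_j$, $j<N$, left-continuous at $z_N$). Then $\mathrm{Var}(\tilde a)\le\mathrm{Var}(a)$. The analogous statement holds for a function $c$ of the same type.
   Context: $C^1_{\mathrm{pw}}[-L,L]$ is the set of $g:[-L,L]\to\mathbb{R}$ for which there is a finite partition $-L=z_0<\dots<z_N=L$ with $g\in C^1[z_{j-1},z_j]$ for each $j$ and, on each $(z_{j-1},z_j)$, either $g'>0$ throughout or $g'\le0$ throughout. For $g$ and such a partition: $g^\pm(z_j)$ are the right/left one-sided limits, $[g]_{z_j}=g^-(z_j)-g^+(z_j)$ for $1\le j\le N-1$, $\partial_{\mathrm{pw}}g=g'$ on each $(z_{j-1},z_j)$, and $\mathrm{Var}(g)=\sum_{\ell=1}^{N-1}|[g]_{z_\ell}|+\int_{-L}^L|\partial_{\mathrm{pw}}g(s)|\,ds$ (here computed with respect to the partition above). *)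

theory Defs
  imports "HOL-Analysis.Analysis"
begin

definition is_partition :: "real \<Rightarrow> (nat \<Rightarrow> real) \<Rightarrow> nat \<Rightarrow> bool" where
  "is_partition L z N \<longleftrightarrow> 1 \<le> N \<and> z 0 = -L \<and> z N = L \<and> (\<forall>j<N. z j < z (Suc j))"

definition C1_piece :: "(real \<Rightarrow> real) \<Rightarrow> real \<Rightarrow> real \<Rightarrow> bool" where
  "C1_piece g x y \<longleftrightarrow> (\<exists>h h'. (\<forall>s\<in>{x..y}. (h has_real_derivative h' s) (at s within {x..y}))
       \<and> continuous_on {x..y} h' \<and> (\<forall>s\<in>{x<..<y}. g s = h s))"

definition incr_piece :: "(real \<Rightarrow> real) \<Rightarrow> real \<Rightarrow> real \<Rightarrow> bool" where
  "incr_piece g x y \<longleftrightarrow> (\<forall>s\<in>{x<..<y}. deriv g s > 0)"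

definition nonincr_piece :: "(real \<Rightarrow> real) \<Rightarrow> real \<Rightarrow> real \<Rightarrow> bool" where
  "nonincr_piece g x y \<longleftrightarrow> (\<forall>s\<in>{x<..<y}. deriv g s \<le> 0)"

definition C1pw_wrt :: "(nat \<Rightarrow> real) \<Rightarrow> nat \<Rightarrow> (real \<Rightarrow> real) \<Rightarrow> bool" where
  "C1pw_wrt z N g \<longleftrightarrow> (\<forall>j\<in>{1..N}. C1_piece g (z (j-1)) (z j)
       \<and> (incr_piece g (z (j-1)) (z j) \<or> nonincr_piece g (z (j-1)) (z j)))"

text \<open>Piecewise derivative (set to 0 at the partition points, a null set).\<close>
definition pw_deriv :: "(nat \<Rightarrow> real) \<Rightarrow> nat \<Rightarrow> (real \<Rightarrow> real) \<Rightarrow> real \<Rightarrow> real" where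
  "pw_deriv z N g s = (if \<exists>j\<in>{1..N}. s \<in> {z (j-1)<..<z j} then deriv g s else 0)"

definition Var_pw :: "(nat \<Rightarrow> real) \<Rightarrow> nat \<Rightarrow> (real \<Rightarrow> real) \<Rightarrow> real" where
  "Var_pw z N g = (\<Sum>l\<in>{1..N-1}. \<bar>Lim (at_left (z l)) g - Lim (at_right (z l)) g\<bar>)
      + integral {z 0..z N} (\<lambda>s. \<bar>pw_deriv z N g s\<bar>)"

definition atilde :: "(nat \<Rightarrow> real) \<Rightarrow> nat \<Rightarrow> (real \<Rightarrow> real) \<Rightarrow> real \<Rightarrow> real" where
  "atilde z N a s =
    (if s = z N then
       (if incr_piece a (z (N-1)) (z N) then Lim (at_left (z N)) a
        else Lim (at_right (z (N-1))) a)
     else if z 0 \<le> s \<and> s < z N then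
       (let j = (THE j. 1 \<le> j \<and> j \<le> N \<and> z (j-1) \<le> s \<and> s < z j) in
         if s = z (j-1) then Lim (at_right (z (j-1))) a
         else if incr_piece a (z (j-1)) (z j) then a s
         else Lim (at_right (z (j-1))) a)
     else 0)"

end

theory Submission
  imports Defs
begin

text \<open>On each piece \<open>a\<close> agrees with a \<open>C\<^sup>1\<close> function \<open>H\<^sub>j\<close> on the closed piece, so \<open>Var(a)\<close>
  is the sum of the jumps \<open>\<bar>H\<^sub>l(z\<^sub>l) - H\<^sub>l\<^sub>+\<^sub>1(z\<^sub>l)\<bar>\<close> and of the integrals \<open>I\<^sub>j = \<integral>\<bar>H\<^sub>j'\<bar>\<close>.
  Replacing \<open>a\<close> by the constant \<open>H\<^sub>j(z\<^sub>j\<^sub>-\<^sub>1)\<close> on a non-increasing piece removes \<open>I\<^sub>j\<close>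
  from the integral part and changes only the jump at \<open>z\<^sub>j\<close>, by at most
  \<open>\<bar>H\<^sub>j(z\<^sub>j) - H\<^sub>j(z\<^sub>j\<^sub>-\<^sub>1)\<bar> \<le> I\<^sub>j\<close> (triangle inequality and the fundamental theorem of calculus).\<close>

lemma partition_less:
  assumes "\<forall>j<N. z j < z (Suc j)" "i < k" "k \<le> N"
  shows "z i < (z k :: real)"
  using assms(2,3)
proof (induction k)
  case (Suc k)
  have "z k < z (Suc k)" using assms(1) Suc.prems by auto
  then show ?case using Suc by (cases "i = k") auto
qed simp

lemma partition_le:
  assumes "\<forall>j<N. z j < z (Suc j)" "i \<le> k" "k \<le> N"
  shows "z i \<le> (z k :: real)"
  using partition_less[OF assms(1)] assms(2,3) by (cases "i = k") (auto intro: less_imp_le)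

definition pw_C1_extension ::
    "(nat \<Rightarrow> real) \<Rightarrow> nat \<Rightarrow> (real \<Rightarrow> real) \<Rightarrow> (nat \<Rightarrow> real \<Rightarrow> real) \<Rightarrow> (nat \<Rightarrow> real \<Rightarrow> real) \<Rightarrow> bool"
  where "pw_C1_extension z N g G G' \<longleftrightarrow> (\<forall>j\<in>{1..N}.
      (\<forall>s\<in>{z (j-1)..z j}. (G j has_real_derivative G' j s) (at s within {z (j-1)..z j}))
      \<and> continuous_on {z (j-1)..z j} (G' j) \<and> (\<forall>s\<in>{z (j-1)<..<z j}. g s = G j s))"

lemma pw_C1_extensionD:
  assumes "pw_C1_extension z N g G G'" "j \<in> {1..N}"
  shows "\<forall>s\<in>{z (j-1)..z j}. (G j has_real_derivative G' j s) (at s within {z (j-1)..z j})"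
    and "continuous_on {z (j-1)..z j} (G' j)"
    and "continuous_on {z (j-1)..z j} (G j)"
    and "\<forall>s\<in>{z (j-1)<..<z j}. g s = G j s"
  using assms continuous_on_eq_continuous_within DERIV_continuous
  unfolding pw_C1_extension_def by blast+

lemma C1pw_wrt_obtains_extension:
  assumes "C1pw_wrt z N g"
  obtains G G' where "pw_C1_extension z N g G G'"
proof -
  have "\<forall>j\<in>{1..N}. \<exists>p. (\<forall>s\<in>{z (j-1)..z j}.
           (fst p has_real_derivative snd p s) (at s within {z (j-1)..z j}))
         \<and> continuous_on {z (j-1)..z j} (snd p) \<and> (\<forall>s\<in>{z (j-1)<..<z j}. g s = fst p s)"
    using assms unfolding C1pw_wrt_def C1_piece_def by fastforce
  then obtain P where "\<forall>j\<in>{1..N}. (\<forall>s\<in>{z (j-1)..z j}.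
           (fst (P j) has_real_derivative snd (P j) s) (at s within {z (j-1)..z j}))
         \<and> continuous_on {z (j-1)..z j} (snd (P j)) \<and> (\<forall>s\<in>{z (j-1)<..<z j}. g s = fst (P j) s)"
    by (rule bchoice[THEN exE]) blast
  then have "pw_C1_extension z N g (\<lambda>j. fst (P j)) (\<lambda>j. snd (P j))"
    unfolding pw_C1_extension_def by blast
  then show thesis by (rule that)
qed

lemma Lim_at_right_eq_extension:
  fixes g G :: "real \<Rightarrow> real"
  assumes "x < y" "continuous_on {x..y} G" "\<forall>s\<in>{x<..<y}. g s = G s"
  shows "Lim (at_right x) g = G x"
proof -
  have "eventually (\<lambda>s. G s = g s) (at_right x)"
    using eventually_at_right_real[OF assms(1)] by eventually_elim (use assms(3) in auto)
  from Lim_transform_eventually[OF continuous_on_Icc_at_rightD[OF assms(2,1)] this]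
  show ?thesis by (intro tendsto_Lim) auto
qed

lemma Lim_at_left_eq_extension:
  fixes g G :: "real \<Rightarrow> real"
  assumes "x < y" "continuous_on {x..y} G" "\<forall>s\<in>{x<..<y}. g s = G s"
  shows "Lim (at_left y) g = G y"
proof -
  have "eventually (\<lambda>s. G s = g s) (at_left y)"
    using eventually_at_left_real[OF assms(1)] by eventually_elim (use assms(3) in auto)
  from Lim_transform_eventually[OF continuous_on_Icc_at_leftD[OF assms(2,1)] this]
  show ?thesis by (intro tendsto_Lim) auto
qed

lemma deriv_eq_extension:
  fixes g G :: "real \<Rightarrow> real"
  assumes "s \<in> {x<..<y}" "(G has_real_derivative D) (at s within {x..y})"
    "\<forall>s\<in>{x<..<y}. g s = G s"
  shows "deriv g s = D"
proof -
  have "at s within {x..y} = at s" using assms(1) by (intro at_within_Icc_at) auto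
  then have "(G has_real_derivative D) (at s)" using assms(2) by simp
  then have "(g has_real_derivative D) (at s)"
    by (rule has_field_derivative_transform_within_open[of _ _ _ "{x<..<y}"]) (use assms in auto)
  then show ?thesis by (rule DERIV_imp_deriv)
qed

lemma abs_diff_le_integral_abs_deriv:
  fixes G G' :: "real \<Rightarrow> real"
  assumes "x \<le> y" "\<forall>s\<in>{x..y}. (G has_real_derivative G' s) (at s within {x..y})"
    "continuous_on {x..y} G'"
  shows "\<bar>G y - G x\<bar> \<le> integral {x..y} (\<lambda>s. \<bar>G' s\<bar>)"
proof -
  have "(G' has_integral (G y - G x)) {x..y}"
    using assms(1,2)
    by (intro fundamental_theorem_of_calculus) (auto simp: has_real_derivative_iff_has_vector_derivative)
  moreover have "(\<lambda>s. \<bar>G' s\<bar>) integrable_on {x..y}"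
    using assms(3) by (intro integrable_continuous_interval continuous_on_rabs)
  ultimately have "norm (integral {x..y} G') \<le> integral {x..y} (\<lambda>s. \<bar>G' s\<bar>)"
    by (intro integral_norm_bound_integral) (auto intro: has_integral_integrable)
  with \<open>(G' has_integral (G y - G x)) {x..y}\<close> show ?thesis by (simp add: integral_unique)
qed

lemma has_integral_partition_sum:
  fixes z :: "nat \<Rightarrow> real" and f :: "real \<Rightarrow> 'a::banach"
  assumes "\<forall>j<N. z j < z (Suc j)"
    "\<And>j. j \<in> {1..N} \<Longrightarrow> (f has_integral I j) {z (j-1)..z j}"
  shows "(f has_integral (\<Sum>j\<in>{1..N}. I j)) {z 0..z N}"
proof -
  have "(f has_integral (\<Sum>j\<in>{1..n}. I j)) {z 0..z n}" if "n \<le> N" for n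
    using that
  proof (induction n)
    case (Suc n)
    have "z 0 \<le> z n" "z n \<le> z (Suc n)"
      using partition_le[OF assms(1), of 0 n] assms(1) Suc.prems by (auto intro: less_imp_le)
    moreover have "(f has_integral I (Suc n)) {z n..z (Suc n)}"
      using assms(2)[of "Suc n"] Suc.prems by simp
    moreover have "(f has_integral (\<Sum>j\<in>{1..n}. I j)) {z 0..z n}"
      using Suc by simp
    ultimately show ?case
      by (simp add: sum.cl_ivl_Suc has_integral_combine)
  qed (use has_integral_null[of "z 0" "z 0" f] in simp)
  then show ?thesis by simp
qed

lemma Var_pw_eq_extension:
  assumes zinc: "\<forall>j<N. z j < z (Suc j)" and ext: "pw_C1_extension z N g G G'"
  shows "Var_pw z N g = (\<Sum>l\<in>{1..N-1}. \<bar>G l (z l) - G (Suc l) (z l)\<bar>)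
           + (\<Sum>j\<in>{1..N}. integral {z (j-1)..z j} (\<lambda>s. \<bar>G' j s\<bar>))"
proof -
  have lt: "z (j-1) < z j" if "j \<in> {1..N}" for j
    using partition_less[OF zinc, of "j-1" j] that by auto
  note D = pw_C1_extensionD(1)[OF ext] and C = pw_C1_extensionD(2)[OF ext]
    and cont = pw_C1_extensionD(3)[OF ext] and E = pw_C1_extensionD(4)[OF ext]
  have jumps: "\<bar>Lim (at_left (z l)) g - Lim (at_right (z l)) g\<bar> = \<bar>G l (z l) - G (Suc l) (z l)\<bar>"
    if "l \<in> {1..N-1}" for l
    using Lim_at_left_eq_extension[OF lt cont E, of l] Lim_at_right_eq_extension[OF lt cont E, of "Suc l"]
      that by auto
  have "((\<lambda>s. \<bar>pw_deriv z N g s\<bar>) has_integral integral {z (j-1)..z j} (\<lambda>s. \<bar>G' j s\<bar>))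
      {z (j-1)..z j}" if j: "j \<in> {1..N}" for j
  proof (rule has_integral_spike_finite[of "{z (j-1), z j}"])
    show "((\<lambda>s. \<bar>G' j s\<bar>) has_integral integral {z (j-1)..z j} (\<lambda>s. \<bar>G' j s\<bar>)) {z (j-1)..z j}"
      using C[OF j] by (intro integrable_integral integrable_continuous_interval continuous_on_rabs)
    fix s assume "s \<in> {z (j-1)..z j} - {z (j-1), z j}"
    then have s: "s \<in> {z (j-1)<..<z j}" by auto
    then have "pw_deriv z N g s = deriv g s" unfolding pw_deriv_def using j by auto
    moreover have "deriv g s = G' j s"
      using deriv_eq_extension[OF s _ E[OF j]] D[OF j] s by auto
    ultimately show "\<bar>pw_deriv z N g s\<bar> = \<bar>G' j s\<bar>" by simp
  qed simp
  then have "integral {z 0..z N} (\<lambda>s. \<bar>pw_deriv z N g s\<bar>)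
      = (\<Sum>j\<in>{1..N}. integral {z (j-1)..z j} (\<lambda>s. \<bar>G' j s\<bar>))"
    by (intro integral_unique has_integral_partition_sum[OF zinc])
  moreover have "(\<Sum>l\<in>{1..N-1}. \<bar>Lim (at_left (z l)) g - Lim (at_right (z l)) g\<bar>)
      = (\<Sum>l\<in>{1..N-1}. \<bar>G l (z l) - G (Suc l) (z l)\<bar>)"
    using jumps by (rule sum.cong[OF refl])
  ultimately show ?thesis unfolding Var_pw_def by simp
qed

lemma atilde_on_piece:
  assumes zinc: "\<forall>j<N. z j < z (Suc j)" and j: "j \<in> {1..N}" and s: "s \<in> {z (j-1)<..<z j}"
  shows "atilde z N a s
    = (if incr_piece a (z (j-1)) (z j) then a s else Lim (at_right (z (j-1))) a)"
proof -
  have piece_unique: "(THE j. 1 \<le> j \<and> j \<le> N \<and> z (j-1) \<le> s \<and> s < z j) = j"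
  proof (rule the_equality)
    fix k assume k: "1 \<le> k \<and> k \<le> N \<and> z (k-1) \<le> s \<and> s < z k"
    have False if "k < j"
      using partition_le[OF zinc, of k "j-1"] that j k s by fastforce
    moreover have False if "j < k"
      using partition_le[OF zinc, of j "k-1"] that k s by fastforce
    ultimately show "k = j" using linorder_neqE_nat by blast
  qed (use j s in auto)
  have "z j \<le> z N" "z 0 \<le> z (j-1)"
    using partition_le[OF zinc, of j N] partition_le[OF zinc, of 0 "j-1"] j by auto
  with s show ?thesis unfolding atilde_def Let_def piece_unique by auto
qed

lemma pw_C1_extension_atilde:
  assumes zinc: "\<forall>j<N. z j < z (Suc j)" and ext: "pw_C1_extension z N a H H'"
  shows "pw_C1_extension z N (atilde z N a)
    (\<lambda>j. if incr_piece a (z (j-1)) (z j) then H j else (\<lambda>_. H j (z (j-1))))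
    (\<lambda>j. if incr_piece a (z (j-1)) (z j) then H' j else (\<lambda>_. 0))"
  unfolding pw_C1_extension_def
proof (rule ballI, intro conjI)
  fix j assume j: "j \<in> {1..N}"
  note D = pw_C1_extensionD(1)[OF ext j] and C = pw_C1_extensionD(2)[OF ext j]
    and E = pw_C1_extensionD(4)[OF ext j]
  have lt: "z (j-1) < z j" using partition_less[OF zinc, of "j-1" j] j by auto
  from Lim_at_right_eq_extension[OF lt pw_C1_extensionD(3)[OF ext j] E]
  have lim: "Lim (at_right (z (j-1))) a = H j (z (j-1))" .
  show "\<forall>s\<in>{z (j-1)..z j}. ((if incr_piece a (z (j-1)) (z j) then H j else (\<lambda>_. H j (z (j-1))))
      has_real_derivative (if incr_piece a (z (j-1)) (z j) then H' j else (\<lambda>_. 0)) s)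
      (at s within {z (j-1)..z j})"
    using D by auto
  show "continuous_on {z (j-1)..z j} (if incr_piece a (z (j-1)) (z j) then H' j else (\<lambda>_. 0))"
    using C by auto
  show "\<forall>s\<in>{z (j-1)<..<z j}. atilde z N a s
      = (if incr_piece a (z (j-1)) (z j) then H j else (\<lambda>_. H j (z (j-1)))) s"
    using atilde_on_piece[OF zinc j] E lim by auto
qed

lemma Var_pw_atilde_le:
  assumes zinc: "\<forall>j<N. z j < z (Suc j)" and "C1pw_wrt z N a"
  shows "Var_pw z N (atilde z N a) \<le> Var_pw z N a"
proof -
  obtain H H' where ext: "pw_C1_extension z N a H H'"
    using C1pw_wrt_obtains_extension[OF assms(2)] .
  define inc where "inc j \<longleftrightarrow> incr_piece a (z (j-1)) (z j)" for j
  define I where "I j = integral {z (j-1)..z j} (\<lambda>s. \<bar>H' j s\<bar>)" for j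
  have I_bounds: "0 \<le> I j" "\<bar>H j (z j) - H j (z (j-1))\<bar> \<le> I j" if j: "j \<in> {1..N}" for j
  proof -
    have "z (j-1) \<le> z j" using partition_le[OF zinc, of "j-1" j] j by auto
    then show "\<bar>H j (z j) - H j (z (j-1))\<bar> \<le> I j" unfolding I_def
      by (rule abs_diff_le_integral_abs_deriv[OF _ pw_C1_extensionD(1,2)[OF ext j]])
    show "0 \<le> I j" unfolding I_def
      using pw_C1_extensionD(2)[OF ext j]
      by (intro integral_nonneg integrable_continuous_interval continuous_on_rabs) auto
  qed
  have jump_le: "\<bar>(if inc l then H l (z l) else H l (z (l-1))) - H (Suc l) (z l)\<bar>
      \<le> \<bar>H l (z l) - H (Suc l) (z l)\<bar> + (if inc l then 0 else I l)" if "l \<in> {1..N-1}" for l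
  proof -
    have "\<bar>H l (z l) - H l (z (l-1))\<bar> \<le> I l" using I_bounds(2)[of l] that by auto
    then show ?thesis by (cases "inc l") (auto simp: abs_if split: if_splits)
  qed
  have "Var_pw z N (atilde z N a)
      = (\<Sum>l\<in>{1..N-1}. \<bar>(if inc l then H l (z l) else H l (z (l-1))) - H (Suc l) (z l)\<bar>)
        + (\<Sum>j\<in>{1..N}. if inc j then I j else 0)"
  proof -
    have "integral {z (j-1)..z j} (\<lambda>s. \<bar>if inc j then H' j s else 0\<bar>) = (if inc j then I j else 0)"
      for j by (cases "inc j") (simp_all add: I_def)
    then show ?thesis
      using Var_pw_eq_extension[OF zinc pw_C1_extension_atilde[OF zinc ext]]
      unfolding inc_def by (simp add: if_distrib[of "\<lambda>f. f _"] cong: if_cong)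
  qed
  also have "\<dots> \<le> (\<Sum>l\<in>{1..N-1}. \<bar>H l (z l) - H (Suc l) (z l)\<bar>)
        + (\<Sum>l\<in>{1..N-1}. if inc l then 0 else I l) + (\<Sum>j\<in>{1..N}. if inc j then I j else 0)"
    unfolding add_le_cancel_right sum.distrib[symmetric] by (rule sum_mono) (rule jump_le)
  also have "\<dots> \<le> (\<Sum>l\<in>{1..N-1}. \<bar>H l (z l) - H (Suc l) (z l)\<bar>)
        + (\<Sum>l\<in>{1..N}. if inc l then 0 else I l) + (\<Sum>j\<in>{1..N}. if inc j then I j else 0)"
    unfolding add_le_cancel_right add_le_cancel_left by (rule sum_mono2) (auto intro: I_bounds(1))
  also have "\<dots> = Var_pw z N a"
  proof -
    have "(\<Sum>l\<in>{1..N}. if inc l then 0 else I l) + (\<Sum>j\<in>{1..N}. if inc j then I j else 0)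
        = (\<Sum>j\<in>{1..N}. I j)"
      unfolding sum.distrib[symmetric] by (rule sum.cong) auto
    then show ?thesis unfolding Var_pw_eq_extension[OF zinc ext] I_def by linarith
  qed
  finally show ?thesis .
qed

theorem proposition5p6:
  fixes L amin :: real and z :: "nat \<Rightarrow> real" and N :: nat and a :: "real \<Rightarrow> real"
  assumes "L > 0"
    and "amin > 0"
    and "\<forall>s\<in>{-L..L}. a s \<ge> amin"
    and "is_partition L z N"
    and "C1pw_wrt z N a"
  shows "Var_pw z N (atilde z N a) \<le> Var_pw z N a"
  using Var_pw_atilde_le assms(4,5) unfolding is_partition_def by blast

end
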